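(* Let $\mathbf C$ be an admissible category of coframes. There is an identity-on-morphisms functor $(L,\nu_L)\mapsto(L,C_{\nu_L})$ from $\mathbf C^{\mathrm{adh}}$ to $\mathbf C^{\mathrm{top}}$, which is right adjoint to the identity-on-morphisms functor $(L,C)\mapsto(L,\nu_C)$ from $\mathbf C^{\mathrm{top}}$ to $\mathbf C^{\mathrm{adh}}$.
   Context: A category of coframes has coframes as objects and coframe morphisms (preserving arbitrary infima and finite suprema); it is admissible if every powerset is an object and there are classes of index sets $\mathcal I,\mathcal J$ with morphisms exactly the monotone maps preserving existing $I$-indexed infima ($I\in\mathcal I$) and $J$-indexed suprema ($J\in\mathcal J$). Each coframe morphism $\varphi$ has a left adjoint $\varphi_!$. $\mathcal C_L$ is the set of complemented elements of $L$. An adherence structure on $L$ is a monotone $\nu:L\to L$ preserving finite suprema of complemented elements with $\nu(\ell)=\bigwedge\{\nu(a):a\in\mathcal C_L,a\ge\ell\}$; $\mathbf C^{\mathrm{adh}}$ has objects $(L,\nu_L)$ and morphisms the $\mathbf C$-morphisms $\varphi:L\to L'$ with $\nu_{L'}(\ell')\le\varphi(\nu_L(\varphi_!(\ell')))$ for all $\ell'$. A topological $\mathbf C$-object is $(L,C(L))$ with $C(L)$ a sublattice of $L$ consisting of complemented elements (its closed elements); $\mathbf C^{\mathrm{top}}$ has as morphisms the $\mathbf C$-morphisms $\varphi$ with $\varphi(C(L))\subseteq C(L')$. For an adherence structure $\nu$, $C_\nu=\{c\in\mathcal C_L:\nu(c)\le c\}$; for a topological structure $C$, $\nu_C(\ell)=\bigwedge\{c\in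 C:c\ge\ell\}$. *)

theory Defs
  imports Main
begin

class coframe = complete_lattice +
  assumes sup_Inf_distrib: "sup a (Inf S) = (INF s\<in>S. sup a s)"

definition complemented :: "'a::coframe set" where
  "complemented = {a. \<exists>b. inf a b = bot \<and> sup a b = top}"

definition coframe_hom :: "('a::coframe \<Rightarrow> 'b::coframe) \<Rightarrow> bool" where
  "coframe_hom \<phi> \<longleftrightarrow> (\<forall>S. \<phi> (Inf S) = Inf (\<phi> ` S)) \<and> \<phi> bot = bot
      \<and> (\<forall>a b. \<phi> (sup a b) = sup (\<phi> a) (\<phi> b))"

text \<open>Morphisms of the admissible category determined by the classes of index sets
  II (for infima) and JJ (for suprema); index sets are subsets of a fixed index type 'i.
  Since all objects are complete, every indexed infimum/supremum exists.\<close>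
definition C_mor :: "'i set set \<Rightarrow> 'i set set \<Rightarrow> ('a::coframe \<Rightarrow> 'b::coframe) \<Rightarrow> bool" where
  "C_mor II JJ \<phi> \<longleftrightarrow> mono \<phi>
     \<and> (\<forall>I\<in>II. \<forall>f::'i \<Rightarrow> 'a. \<phi> (INF i\<in>I. f i) = (INF i\<in>I. \<phi> (f i)))
     \<and> (\<forall>J\<in>JJ. \<forall>f::'i \<Rightarrow> 'a. \<phi> (SUP j\<in>J. f j) = (SUP j\<in>J. \<phi> (f j)))"

definition lower_adj :: "('a::coframe \<Rightarrow> 'b::coframe) \<Rightarrow> 'b \<Rightarrow> 'a" where
  "lower_adj \<phi> l' = Inf {l. l' \<le> \<phi> l}"

definition adherence :: "('a::coframe \<Rightarrow> 'a) \<Rightarrow> bool" where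
  "adherence \<nu> \<longleftrightarrow> mono \<nu>
     \<and> \<nu> bot = bot
     \<and> (\<forall>a\<in>complemented. \<forall>b\<in>complemented. \<nu> (sup a b) = sup (\<nu> a) (\<nu> b))
     \<and> (\<forall>l. \<nu> l = Inf {\<nu> a | a. a \<in> complemented \<and> l \<le> a})"

definition adh_mor :: "'i set set \<Rightarrow> 'i set set \<Rightarrow> ('a::coframe \<Rightarrow> 'a) \<Rightarrow> ('b::coframe \<Rightarrow> 'b)
    \<Rightarrow> ('a \<Rightarrow> 'b) \<Rightarrow> bool" where
  "adh_mor II JJ \<nu> \<nu>' \<phi> \<longleftrightarrow> C_mor II JJ \<phi> \<and> (\<forall>l'. \<nu>' l' \<le> \<phi> (\<nu> (lower_adj \<phi> l')))"

definition topological :: "'a::coframe set \<Rightarrow> bool" where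
  "topological C \<longleftrightarrow> C \<subseteq> complemented \<and> bot \<in> C \<and> top \<in> C
     \<and> (\<forall>a\<in>C. \<forall>b\<in>C. sup a b \<in> C \<and> inf a b \<in> C)"

definition top_mor :: "'i set set \<Rightarrow> 'i set set \<Rightarrow> 'a::coframe set \<Rightarrow> 'b::coframe set
    \<Rightarrow> ('a \<Rightarrow> 'b) \<Rightarrow> bool" where
  "top_mor II JJ C C' \<phi> \<longleftrightarrow> C_mor II JJ \<phi> \<and> \<phi> ` C \<subseteq> C'"

definition C_of :: "('a::coframe \<Rightarrow> 'a) \<Rightarrow> 'a set" where
  "C_of \<nu> = {c \<in> complemented. \<nu> c \<le> c}"

definition nu_of :: "'a::coframe set \<Rightarrow> 'a \<Rightarrow> 'a" where
  "nu_of C l = Inf {c \<in> C. l \<le> c}"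

end

theory Submission
  imports Defs
begin

text \<open>A coframe morphism \<open>\<phi>\<close> is right adjoint to \<open>lower_adj \<phi>\<close>. For the adherence
  \<open>nu_of C\<close> of a topology \<open>C\<close>, the morphism condition \<open>\<nu>' l' \<le> \<phi> (nu_of C (lower_adj \<phi> l'))\<close>
  therefore reduces, as \<open>\<phi>\<close> preserves the meet defining \<open>nu_of C\<close>, to \<open>\<nu>' (\<phi> c) \<le> \<phi> c\<close>
  for \<open>c \<in> C\<close>, i.e. to \<open>\<phi> ` C \<subseteq> C_of \<nu>'\<close>: the two hom-sets coincide. Functoriality of
  both constructions then follows from \<open>\<nu> \<le> nu_of (C_of \<nu>)\<close> and \<open>C \<subseteq> C_of (nu_of C)\<close>.\<close>

lemma coframe_sup_inf_distrib: "sup a (inf b c) = inf (sup a b) (sup (a::'a::coframe) c)"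
  using sup_Inf_distrib[of a "{b, c}"] by simp

lemma coframe_inf_sup_distrib: "inf a (sup b c) = sup (inf a b) (inf (a::'a::coframe) c)"
  by (rule distrib_imp2) (rule coframe_sup_inf_distrib)

lemma sup_Inf_Inf:
  "sup (Inf X) (Inf Y) = (INF x\<in>X. INF y\<in>Y. sup x (y::'a::coframe))"
  by (subst INF_commute) (simp add: sup_Inf_distrib sup_commute)

lemma bot_top_complemented: "bot \<in> complemented" "top \<in> complemented"
  unfolding complemented_def by auto

lemma complemented_sup:
  assumes "a \<in> complemented" "b \<in> complemented"
  shows "sup a (b::'a::coframe) \<in> complemented"
proof -
  obtain a' b' where "inf a a' = bot" "sup a a' = top" "inf b b' = bot" "sup b b' = top"
    using assms unfolding complemented_def by blast
  moreover have "inf (sup a b) (inf a' b') = sup (inf (inf a a') b') (inf (inf b b') a')"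
    unfolding inf_commute[of "sup a b"] coframe_inf_sup_distrib by (simp add: inf_aci)
  moreover have "sup (sup a b) (inf a' b') = inf (sup (sup a a') b) (sup (sup b b') a)"
    unfolding coframe_sup_inf_distrib by (simp add: sup_aci)
  ultimately show ?thesis unfolding complemented_def by auto
qed

lemma complemented_inf:
  assumes "a \<in> complemented" "b \<in> complemented"
  shows "inf a (b::'a::coframe) \<in> complemented"
proof -
  obtain a' b' where "inf a a' = bot" "sup a a' = top" "inf b b' = bot" "sup b b' = top"
    using assms unfolding complemented_def by blast
  moreover have "inf (inf a b) (sup a' b') = sup (inf (inf a a') b) (inf (inf b b') a)"
    unfolding coframe_inf_sup_distrib by (simp add: inf_aci)
  moreover have "sup (inf a b) (sup a' b') = inf (sup (sup a a') b') (sup (sup b b') a')"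
    unfolding sup_commute[of "inf a b"] coframe_sup_inf_distrib by (simp add: sup_aci)
  ultimately show ?thesis unfolding complemented_def by auto
qed

lemma coframe_hom_Inf: "coframe_hom \<phi> \<Longrightarrow> \<phi> (Inf S) = Inf (\<phi> ` S)"
  unfolding coframe_hom_def by blast

lemma coframe_hom_inf: "coframe_hom \<phi> \<Longrightarrow> \<phi> (inf a b) = inf (\<phi> a) (\<phi> b)"
  using coframe_hom_Inf[of \<phi> "{a, b}"] by simp

lemma coframe_hom_mono: "coframe_hom \<phi> \<Longrightarrow> mono \<phi>"
  by (rule monoI) (metis coframe_hom_inf inf.absorb_iff1)

lemma coframe_hom_complemented:
  assumes "coframe_hom \<phi>" "a \<in> complemented"
  shows "\<phi> a \<in> complemented"
proof -
  obtain a' where "inf a a' = bot" "sup a a' = top"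
    using assms(2) unfolding complemented_def by blast
  moreover have "\<phi> top = top"
    using coframe_hom_Inf[OF assms(1), of "{}"] by simp
  ultimately have "inf (\<phi> a) (\<phi> a') = bot" "sup (\<phi> a) (\<phi> a') = top"
    using assms(1) coframe_hom_inf[OF assms(1)] unfolding coframe_hom_def by metis+
  then show ?thesis unfolding complemented_def by blast
qed

lemma lower_adj_le_iff:
  assumes "coframe_hom \<phi>"
  shows "lower_adj \<phi> l' \<le> l \<longleftrightarrow> l' \<le> \<phi> l"
proof
  have "l' \<le> \<phi> (lower_adj \<phi> l')"
    unfolding lower_adj_def coframe_hom_Inf[OF assms] by (auto intro: Inf_greatest)
  then show "lower_adj \<phi> l' \<le> l \<Longrightarrow> l' \<le> \<phi> l"
    using coframe_hom_mono[OF assms] by (meson monoD order_trans)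
qed (simp add: lower_adj_def Inf_lower)

lemma adherence_mono: "adherence \<nu> \<Longrightarrow> mono \<nu>"
  unfolding adherence_def by blast

lemma nu_of_mono: "mono (nu_of C)"
  unfolding nu_of_def by (rule monoI) (auto intro: Inf_superset_mono)

lemma nu_of_least: "c \<in> C \<Longrightarrow> l \<le> c \<Longrightarrow> nu_of C l \<le> c"
  unfolding nu_of_def by (auto intro: Inf_lower)

lemma nu_of_eq: "c \<in> C \<Longrightarrow> nu_of C c = c"
  unfolding nu_of_def by (auto intro: antisym Inf_lower Inf_greatest)

lemma nu_of_sup:
  assumes "\<And>a b. a \<in> C \<Longrightarrow> b \<in> C \<Longrightarrow> sup a b \<in> C"
  shows "nu_of C (sup a b) = sup (nu_of C a) (nu_of (C::'a::coframe set) b)"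
proof (rule antisym)
  have "nu_of C (sup a b) \<le> sup x y" if "x \<in> C" "a \<le> x" "y \<in> C" "b \<le> y" for x y
    using nu_of_least[OF assms sup_mono] that by blast
  then show "nu_of C (sup a b) \<le> sup (nu_of C a) (nu_of C b)"
    unfolding nu_of_def[of C a] nu_of_def[of C b] sup_Inf_Inf by (auto intro!: INF_greatest)
qed (rule mono_sup[OF nu_of_mono])

lemma topological_C_of:
  assumes "adherence (\<nu>::'a::coframe \<Rightarrow> 'a)"
  shows "topological (C_of \<nu>)"
  unfolding topological_def
proof (intro conjI ballI)
  have mono: "mono \<nu>" and bot: "\<nu> bot = bot"
    and sup: "\<And>a b. a \<in> complemented \<Longrightarrow> b \<in> complemented \<Longrightarrow> \<nu> (sup a b) = sup (\<nu> a) (\<nu> b)"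
    using assms unfolding adherence_def by blast+
  show "bot \<in> C_of \<nu>" "top \<in> C_of \<nu>"
    using bot bot_top_complemented unfolding C_of_def by simp_all
  fix a b assume "a \<in> C_of \<nu>" "b \<in> C_of \<nu>"
  then have a: "a \<in> complemented" "\<nu> a \<le> a" and b: "b \<in> complemented" "\<nu> b \<le> b"
    unfolding C_of_def by auto
  have "\<nu> (inf a b) \<le> inf (\<nu> a) (\<nu> b)"
    using mono by (rule mono_inf)
  also have "\<dots> \<le> inf a b"
    using a(2) b(2) by (rule inf_mono)
  finally show "inf a b \<in> C_of \<nu>"
    using complemented_inf[OF a(1) b(1)] unfolding C_of_def by blast
  have "\<nu> (sup a b) \<le> sup a b"
    using sup[OF a(1) b(1)] sup_mono[OF a(2) b(2)] by simp
  then show "sup a b \<in> C_of \<nu>"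
    using complemented_sup[OF a(1) b(1)] unfolding C_of_def by blast
qed (simp add: C_of_def subsetI)

lemma adherence_nu_of:
  assumes "topological (C::'a::coframe set)"
  shows "adherence (nu_of C)"
  unfolding adherence_def
proof (intro conjI ballI allI)
  have C: "C \<subseteq> complemented" "bot \<in> C" "\<And>a b. a \<in> C \<Longrightarrow> b \<in> C \<Longrightarrow> sup a b \<in> C"
    using assms unfolding topological_def by auto
  show "nu_of C bot = bot" "\<And>a b. nu_of C (sup a b) = sup (nu_of C a) (nu_of C b)"
    using C by (simp_all add: nu_of_eq nu_of_sup)
  fix l
  show "nu_of C l = Inf {nu_of C a | a. a \<in> complemented \<and> l \<le> a}"
  proof (rule antisym)
    show "nu_of C l \<le> Inf {nu_of C a | a. a \<in> complemented \<and> l \<le> a}"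
      by (auto intro!: Inf_greatest monoD[OF nu_of_mono])
    have "Inf {nu_of C a | a. a \<in> complemented \<and> l \<le> a} \<le> c" if "c \<in> C" "l \<le> c" for c
    proof -
      have "nu_of C c \<in> {nu_of C a | a. a \<in> complemented \<and> l \<le> a}"
        using that C(1) by blast
      then show ?thesis
        unfolding nu_of_eq[OF \<open>c \<in> C\<close>] by (rule Inf_lower)
    qed
    then show "Inf {nu_of C a | a. a \<in> complemented \<and> l \<le> a} \<le> nu_of C l"
      unfolding nu_of_def[of C l] by (auto intro: Inf_greatest)
  qed
qed (rule nu_of_mono)

lemma le_nu_of_C_of:
  assumes "mono \<nu>"
  shows "\<nu> l \<le> nu_of (C_of \<nu>) l"
proof -
  have "\<nu> l \<le> c" if "c \<in> C_of \<nu>" "l \<le> c" for c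
    using that monoD[OF assms \<open>l \<le> c\<close>] unfolding C_of_def by auto
  then show ?thesis
    unfolding nu_of_def by (auto intro: Inf_greatest)
qed

lemma subset_C_of_nu_of: "C \<subseteq> complemented \<Longrightarrow> C \<subseteq> C_of (nu_of C)"
  unfolding C_of_def by (auto simp: nu_of_eq)

lemma nu_of_adh_condition_iff:
  fixes \<phi> :: "'a::coframe \<Rightarrow> 'b::coframe"
  assumes \<phi>: "coframe_hom \<phi>" and "C \<subseteq> complemented" "mono \<nu>'"
  shows "(\<forall>l'. \<nu>' l' \<le> \<phi> (nu_of C (lower_adj \<phi> l'))) \<longleftrightarrow> \<phi> ` C \<subseteq> C_of \<nu>'"
proof
  assume adh: "\<forall>l'. \<nu>' l' \<le> \<phi> (nu_of C (lower_adj \<phi> l'))"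
  show "\<phi> ` C \<subseteq> C_of \<nu>'"
  proof (rule image_subsetI)
    fix c assume "c \<in> C"
    then have "nu_of C (lower_adj \<phi> (\<phi> c)) \<le> c"
      by (simp add: nu_of_least lower_adj_le_iff[OF \<phi>])
    then have "\<nu>' (\<phi> c) \<le> \<phi> c"
      using adh coframe_hom_mono[OF \<phi>] by (meson monoD order_trans)
    then show "\<phi> c \<in> C_of \<nu>'"
      using \<open>c \<in> C\<close> assms(2) coframe_hom_complemented[OF \<phi>] unfolding C_of_def by auto
  qed
next
  assume "\<phi> ` C \<subseteq> C_of \<nu>'"
  then have closed: "\<nu>' (\<phi> c) \<le> \<phi> c" if "c \<in> C" for c
    using that unfolding C_of_def by auto
  have below: "\<nu>' l' \<le> \<phi> c" if "c \<in> C" "lower_adj \<phi> l' \<le> c" for l' c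
    using that closed \<open>mono \<nu>'\<close> by (meson lower_adj_le_iff[OF \<phi>] monoD order_trans)
  show "\<forall>l'. \<nu>' l' \<le> \<phi> (nu_of C (lower_adj \<phi> l'))"
    unfolding nu_of_def coframe_hom_Inf[OF \<phi>] by (blast intro: INF_greatest below)
qed

lemma adh_mor_nu_of_iff_top_mor_C_of:
  assumes "C_mor II JJ \<phi> \<Longrightarrow> coframe_hom \<phi>" "topological C" "mono \<nu>'"
  shows "adh_mor II JJ (nu_of C) \<nu>' \<phi> \<longleftrightarrow> top_mor II JJ C (C_of \<nu>') \<phi>"
proof (cases "C_mor II JJ \<phi>")
  case True
  moreover have "C \<subseteq> complemented"
    using assms(2) unfolding topological_def by blast
  ultimately show ?thesis
    unfolding adh_mor_def top_mor_def using nu_of_adh_condition_iff assms(1,3) by simp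
qed (simp add: adh_mor_def top_mor_def)

lemma top_mor_C_of_if_adh_mor:
  assumes hom: "C_mor II JJ \<phi> \<Longrightarrow> coframe_hom \<phi>"
    and "adherence \<nu>" "adherence \<nu>'" "adh_mor II JJ \<nu> \<nu>' \<phi>"
  shows "top_mor II JJ (C_of \<nu>) (C_of \<nu>') \<phi>"
proof -
  have "mono \<phi>"
    using assms(4) hom coframe_hom_mono unfolding adh_mor_def by blast
  then have "adh_mor II JJ (nu_of (C_of \<nu>)) \<nu>' \<phi>"
    using assms(2,4) adherence_mono le_nu_of_C_of unfolding adh_mor_def
    by (meson monoD order_trans)
  moreover have "topological (C_of \<nu>)" "mono \<nu>'"
    using assms(2,3) by (simp_all add: topological_C_of adherence_mono)
  ultimately show ?thesis
    using adh_mor_nu_of_iff_top_mor_C_of[OF hom] by blast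
qed

lemma adh_mor_nu_of_if_top_mor:
  assumes hom: "C_mor II JJ \<phi> \<Longrightarrow> coframe_hom \<phi>"
    and "topological C" "topological C'" "top_mor II JJ C C' \<phi>"
  shows "adh_mor II JJ (nu_of C) (nu_of C') \<phi>"
proof -
  have "top_mor II JJ C (C_of (nu_of C')) \<phi>"
    using assms(3,4) subset_C_of_nu_of unfolding top_mor_def topological_def by blast
  then show ?thesis
    by (simp add: adh_mor_nu_of_iff_top_mor_C_of[OF hom assms(2) nu_of_mono])
qed

theorem mainTheorem13:
  fixes II JJ :: "'i set set"
  assumes coframe_cat: "\<And>\<phi> :: 'a::coframe \<Rightarrow> 'b::coframe. C_mor II JJ \<phi> \<Longrightarrow> coframe_hom \<phi>"
  shows
    \<comment> \<open>object part of the functor adh -> top\<close>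
    "(\<forall>\<nu> :: 'a \<Rightarrow> 'a. adherence \<nu> \<longrightarrow> topological (C_of \<nu>))
     \<comment> \<open>object part of the functor top -> adh\<close>
   \<and> (\<forall>C :: 'a set. topological C \<longrightarrow> adherence (nu_of C))
     \<comment> \<open>adh -> top is identity on morphisms\<close>
   \<and> (\<forall>(\<nu> :: 'a \<Rightarrow> 'a) (\<nu>' :: 'b \<Rightarrow> 'b) (\<phi> :: 'a \<Rightarrow> 'b).
        adherence \<nu> \<longrightarrow> adherence \<nu>' \<longrightarrow> adh_mor II JJ \<nu> \<nu>' \<phi>
        \<longrightarrow> top_mor II JJ (C_of \<nu>) (C_of \<nu>') \<phi>)
     \<comment> \<open>top -> adh is identity on morphisms\<close>
   \<and> (\<forall>(C :: 'a set) (C' :: 'b set) (\<phi> :: 'a \<Rightarrow> 'b).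
        topological C \<longrightarrow> topological C' \<longrightarrow> top_mor II JJ C C' \<phi>
        \<longrightarrow> adh_mor II JJ (nu_of C) (nu_of C') \<phi>)
     \<comment> \<open>adjunction: hom-sets coincide (natural bijection = identity)\<close>
   \<and> (\<forall>(C :: 'a set) (\<nu>' :: 'b \<Rightarrow> 'b) (\<phi> :: 'a \<Rightarrow> 'b).
        topological C \<longrightarrow> adherence \<nu>' \<longrightarrow>
        (adh_mor II JJ (nu_of C) \<nu>' \<phi> \<longleftrightarrow> top_mor II JJ C (C_of \<nu>') \<phi>))"
  by (intro conjI allI impI topological_C_of adherence_nu_of
      top_mor_C_of_if_adh_mor[OF coframe_cat] adh_mor_nu_of_if_top_mor[OF coframe_cat]
      adh_mor_nu_of_iff_top_mor_C_of[OF coframe_cat] adherence_mono)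

end
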